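(* Let $A\in\mathbb{R}^{N\times N}$, $b^{ex},e\in\mathbb{R}^N$ with $e\ne0$, $b=b^{ex}+e$, and let $m\ge1$ be such that $A^kb\ne0$ and $A^kb^{ex}\ne0$ for $0\le k\le m$. Define \[ \widetilde V_{m+1}=\left[\frac{b}{\|b\|},\frac{Ab}{\|Ab\|},\dots,\frac{A^{m}b}{\|A^{m}b\|}\right],\quad \widetilde V_{m+1}^{ex}=\left[\frac{b^{ex}}{\|b^{ex}\|},\frac{Ab^{ex}}{\|Ab^{ex}\|},\dots,\frac{A^{m}b^{ex}}{\|A^{m}b^{ex}\|}\right]. \] Let $r_m$ and $r_m^{ex}$ be the $m$-th GMRES residuals for $Ax=b$ and $Ax=b^{ex}$ respectively, and let $s^{ex}\in\mathbb{R}^{m+1}$ with first component $s^{ex}_1=0$ be such that $\|r_m^{ex}\|=\|b^{ex}-\widetilde V_{m+1}^{ex}s^{ex}\|$. Then \[ \|r_m\|\le\eta(m)\|e\|,\qquad \eta(m)=1+\frac{\|r_m^{ex}\|+\|(\widetilde V_{m+1}-\widetilde V_{m+1}^{ex})s^{ex}\|}{\|e\|}. \]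
   Context: GMRES with zero initial guess: the $m$-th residual $r_m=b-Ax_m$, where $x_m$ minimizes $\|b-Ax\|$ over $x\in\mathrm{span}\{b,Ab,\dots,A^{m-1}b\}$; equivalently $\|r_m\|=\min_{s\in\mathbb{R}^{m+1},\,s_1=0}\|b-\widetilde V_{m+1}s\|$, and analogously for $b^{ex}$ with $\widetilde V^{ex}_{m+1}$. Norms are Euclidean. *)

theory Defs
  imports "HOL-Analysis.Analysis"
begin

definition krylov_vec :: "real^'n^'n \<Rightarrow> nat \<Rightarrow> real^'n \<Rightarrow> real^'n" where
  "krylov_vec A k v = (((*v) A) ^^ k) v"

definition krylov_space :: "real^'n^'n \<Rightarrow> real^'n \<Rightarrow> nat \<Rightarrow> (real^'n) set" where
  "krylov_space A v m = span {krylov_vec A k v | k. k < m}"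

text \<open>Norm of the m-th GMRES residual (zero initial guess):
  min over x in the Krylov space of norm(v - A x).\<close>
definition gmres_res_norm :: "real^'n^'n \<Rightarrow> real^'n \<Rightarrow> nat \<Rightarrow> real" where
  "gmres_res_norm A v m = Inf {norm (v - A *v x) | x. x \<in> krylov_space A v m}"

text \<open>Product of the normalized Krylov matrix
  [v/|v|, Av/|Av|, ..., A^m v/|A^m v|] with a coefficient vector s
  (entries s 0, ..., s m; s 0 is the paper's s_1).\<close>
definition Vtilde_mult :: "real^'n^'n \<Rightarrow> real^'n \<Rightarrow> nat \<Rightarrow> (nat \<Rightarrow> real) \<Rightarrow> real^'n" where
  "Vtilde_mult A v m s = (\<Sum>k\<le>m. s k *\<^sub>R (krylov_vec A k v /\<^sub>R norm (krylov_vec A k v)))"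

end

theory Submission
  imports Defs
begin

text \<open>Because \<open>s 0 = 0\<close>, the vector \<open>Vtilde_mult A b m s\<close> is a combination of
  \<open>A b, \<dots>, A^m b\<close> only, hence equals \<open>A x\<close> for some \<open>x\<close> in the Krylov space of \<open>b\<close>,
  an admissible candidate in the GMRES minimisation. Its residual for \<open>b = bex + e\<close> splits as
  \<open>(bex - Vtilde_mult A bex m s) + e - (Vtilde_mult A b m s - Vtilde_mult A bex m s)\<close>,
  and the triangle inequality gives the bound.\<close>

lemma krylov_vec_Suc: "krylov_vec A (Suc k) v = A *v krylov_vec A k v"
  by (simp add: krylov_vec_def)

lemma Vtilde_mult_in_image_krylov_space:
  assumes "s 0 = 0"
  obtains x where "x \<in> krylov_space A v m" "Vtilde_mult A v m s = A *v x"
proof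
  define c where "c k = s (Suc k) / norm (krylov_vec A (Suc k) v)" for k
  define x where "x = (\<Sum>k<m. c k *\<^sub>R krylov_vec A k v)"
  show "x \<in> krylov_space A v m"
    unfolding x_def krylov_space_def by (intro span_sum span_mul span_base) auto
  have "Vtilde_mult A v m s
      = (\<Sum>k<m. s (Suc k) *\<^sub>R (krylov_vec A (Suc k) v /\<^sub>R norm (krylov_vec A (Suc k) v)))"
    unfolding Vtilde_mult_def by (simp add: sum.atMost_shift assms)
  also have "\<dots> = (\<Sum>k<m. c k *\<^sub>R (A *v krylov_vec A k v))"
    by (simp add: c_def krylov_vec_Suc divide_inverse)
  also have "\<dots> = A *v x"
    by (simp add: x_def linear_sum[OF matrix_vector_mul_linear] matrix_vector_mult_scaleR)
  finally show "Vtilde_mult A v m s = A *v x" .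
qed

lemma gmres_res_norm_le:
  assumes "x \<in> krylov_space A v m"
  shows "gmres_res_norm A v m \<le> norm (v - A *v x)"
  unfolding gmres_res_norm_def
  by (rule cInf_lower) (use assms in \<open>auto intro: bdd_belowI[where m=0]\<close>)

theorem proposition2:
  fixes A :: "real^'n^'n" and bex e :: "real^'n" and m :: nat and sex :: "nat \<Rightarrow> real"
  assumes "e \<noteq> 0"
    and "m \<ge> 1"
    and "\<forall>k\<le>m. krylov_vec A k (bex + e) \<noteq> 0"
    and "\<forall>k\<le>m. krylov_vec A k bex \<noteq> 0"
    and "sex 0 = 0"
    and "gmres_res_norm A bex m = norm (bex - Vtilde_mult A bex m sex)"
  shows "gmres_res_norm A (bex + e) m \<le>
    (1 + (gmres_res_norm A bex m
          + norm (Vtilde_mult A (bex + e) m sex - Vtilde_mult A bex m sex)) / norm e) * norm e"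
proof -
  let ?b = "bex + e"
  let ?d = "Vtilde_mult A ?b m sex - Vtilde_mult A bex m sex"
  obtain x where x: "x \<in> krylov_space A ?b m" "Vtilde_mult A ?b m sex = A *v x"
    using Vtilde_mult_in_image_krylov_space assms(5) by blast
  have "gmres_res_norm A ?b m \<le> norm (?b - A *v x)"
    using x(1) by (rule gmres_res_norm_le)
  also have "?b - A *v x = (bex - Vtilde_mult A bex m sex) + e - ?d"
    using x(2) by (simp add: algebra_simps)
  also have "norm \<dots> \<le> norm (bex - Vtilde_mult A bex m sex) + norm e + norm ?d"
    by (meson norm_triangle_ineq norm_triangle_ineq4 add_right_mono order_trans)
  also have "\<dots> = (1 + (gmres_res_norm A bex m + norm ?d) / norm e) * norm e"
    using assms(1,6) by (simp add: field_simps)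
  finally show ?thesis .
qed

end
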